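(* Consider the two "pruning relations" among directed graphs on vertex set $[n]$ (for distinct $i,j,k$): (Pruning V) $\{(i,j),(i,k)\} = \{(i,j),(j,k)\} - \{(i,k),(k,j)\}$, and (Pruning A) $\{(i,k),(j,k)\} = \{(i,j),(j,k)\} - \{(j,i),(i,k)\}$, whose left-hand term is called the join term. A multiple of one of these relations is obtained by adding the same set $E$ of additional directed edges to each of its three terms, such that none of the three resulting graphs contains a loop (a cycle of the underlying undirected multigraph, oriented or not). Then in every multiple of either pruning relation, the term built from the join term has defect strictly larger than the defect of each of the other two terms.
   Context: For a directed forest (a directed graph whose underlying undirected multigraph has no cycles), a pair of distinct vertices in the same connected component is unordered if there is no directed path of edges from one to the other. The defect of a tree is its number of unordered pairs of vertices, and the defect of a forest is the sum of the defects of its connected components. *)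

theory Defs
  imports Main
begin

text \<open>A directed graph on vertex set [n] = {1..n} is a set of directed edges
  D :: (nat \<times> nat) set with D \<subseteq> {1..n} \<times> {1..n}.\<close>

definition joins :: "nat \<times> nat \<Rightarrow> nat \<Rightarrow> nat \<Rightarrow> bool" where
  "joins e u v \<longleftrightarrow> e = (u, v) \<or> e = (v, u)"

text \<open>Length 1 is a
  self-loop, length 2 a pair of antiparallel edges.\<close>
definition has_loop :: "(nat \<times> nat) set \<Rightarrow> bool" where
  "has_loop D \<longleftrightarrow> (\<exists>es vs. es \<noteq> [] \<and> length vs = length es \<and> distinct es \<and> distinct vs
      \<and> set es \<subseteq> D
      \<and> (\<forall>k < length es. joins (es ! k) (vs ! k) (vs ! ((k + 1) mod length es))))"

definition directed_forest :: "(nat \<times> nat) set \<Rightarrow> bool" where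
  "directed_forest D \<longleftrightarrow> \<not> has_loop D"

definition same_component :: "(nat \<times> nat) set \<Rightarrow> nat \<Rightarrow> nat \<Rightarrow> bool" where
  "same_component D u v \<longleftrightarrow> (u, v) \<in> (D \<union> D\<inverse>)\<^sup>*"

definition unordered_pair :: "(nat \<times> nat) set \<Rightarrow> nat \<Rightarrow> nat \<Rightarrow> bool" where
  "unordered_pair D u v \<longleftrightarrow> u \<noteq> v \<and> same_component D u v
      \<and> (u, v) \<notin> D\<^sup>* \<and> (v, u) \<notin> D\<^sup>*"

text \<open>Defect of a directed forest on [n]: the number of unordered pairs of vertices
  (= sum over components of the defects of the component trees).\<close>
definition defect :: "nat \<Rightarrow> (nat \<times> nat) set \<Rightarrow> nat" where
  "defect n D = card {{u, v} | u v. u \<in> {1..n} \<and> v \<in> {1..n} \<and> unordered_pair D u v}"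

text \<open>Terms of the pruning relations: (join term, first term, subtracted term).\<close>
definition pruningV :: "nat \<Rightarrow> nat \<Rightarrow> nat \<Rightarrow> (nat \<times> nat) set \<times> (nat \<times> nat) set \<times> (nat \<times> nat) set" where
  "pruningV i j k = ({(i,j),(i,k)}, {(i,j),(j,k)}, {(i,k),(k,j)})"

definition pruningA :: "nat \<Rightarrow> nat \<Rightarrow> nat \<Rightarrow> (nat \<times> nat) set \<times> (nat \<times> nat) set \<times> (nat \<times> nat) set" where
  "pruningA i j k = ({(i,k),(j,k)}, {(i,j),(j,k)}, {(j,i),(i,k)})"

end

(* Each non-join term X keeps one edge of the fork J and replaces the other by an edge
   between the two leaves of the fork (j and k for Pruning V, i and j for Pruning A).
   Every edge of J is a directed path in X, and every edge of X joins vertices of one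
   component of J; so, after adding E, the components agree and every unordered pair of
   X + E is unordered in J + E.  The two leaves are unordered in the forest J + E, since a
   directed path between two out-neighbours of a vertex closes a cycle, but ordered in
   X + E, so the defect drops strictly.  Reversing all edges preserves defects and forests
   and turns in-forks into out-forks. *)

theory Submission
  imports Defs "HOL-Library.Transitive_Closure_Table"
begin

lemma rtrancl_path_successively:
  "rtrancl_path r x xs y \<Longrightarrow> successively r (x # xs) \<and> last (x # xs) = y"
  by (induction rule: rtrancl_path.induct) (auto simp: successively_Cons)

lemma rtrancl_distinct_path:
  assumes "(x, y) \<in> D\<^sup>*"
  obtains vs where "distinct (x # vs)" "successively (\<lambda>u v. (u, v) \<in> D) (x # vs)"
    "last (x # vs) = y"
proof -
  from assms have "(\<lambda>u v. (u, v) \<in> D)\<^sup>*\<^sup>* x y"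
    unfolding rtrancl_def by simp
  then obtain xs where "rtrancl_path (\<lambda>u v. (u, v) \<in> D) x xs y"
    unfolding rtranclp_eq_rtrancl_path ..
  then obtain vs where path: "rtrancl_path (\<lambda>u v. (u, v) \<in> D) x vs y"
    and "distinct (x # vs)"
    by (rule rtrancl_path_distinct)
  have "successively (\<lambda>u v. (u, v) \<in> D) (x # vs)" "last (x # vs) = y"
    using rtrancl_path_successively[OF path] by simp_all
  with \<open>distinct (x # vs)\<close> show thesis
    by (rule that)
qed

lemma successively_zip_tl:
  "successively P xs \<Longrightarrow> (u, v) \<in> set (zip xs (tl xs)) \<Longrightarrow> P u v"
  by (auto simp: in_set_zip nth_tl successively_nth)

lemma has_loop_if_rtrancl_Diff_edge:
  assumes "e \<in> D" "(v, u) \<in> (D - {e})\<^sup>*" "joins e u v"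
  shows "has_loop D"
proof -
  obtain ws where ws: "distinct (v # ws)" "successively (\<lambda>x y. (x, y) \<in> D - {e}) (v # ws)"
    "last (v # ws) = u"
    using assms(2) by (rule rtrancl_distinct_path)
  define vs where "vs = v # ws"
  define es where "es = zip vs (tl vs) @ [e]"
  have path_edges: "set (zip vs (tl vs)) \<subseteq> D - {e}"
    using ws(2) successively_zip_tl unfolding vs_def by fast
  have len: "length es = length vs"
    by (simp add: es_def vs_def)
  have "distinct (zip vs (tl vs))"
    using ws(1) by (simp add: vs_def distinct_zipI1)
  with path_edges have "distinct es"
    by (auto simp: es_def)
  moreover have "set es \<subseteq> D"
    using path_edges assms(1) by (auto simp: es_def)
  moreover have "\<forall>k < length es. joins (es ! k) (vs ! k) (vs ! ((k + 1) mod length es))"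
  proof (intro allI impI)
    fix k
    assume "k < length es"
    then consider "k < length ws" | "k = length ws"
      using len by (fastforce simp: vs_def)
    then show "joins (es ! k) (vs ! k) (vs ! ((k + 1) mod length es))"
    proof cases
      case 1
      then show ?thesis
        using len by (simp add: es_def vs_def nth_append nth_tl joins_def)
    next
      case 2
      moreover have "vs ! length ws = u"
        using ws(3) last_conv_nth[of vs] by (simp add: vs_def)
      ultimately show ?thesis
        using assms(3) len by (simp add: es_def vs_def nth_append joins_def)
    qed
  qed
  moreover have "es \<noteq> []" "distinct vs"
    using ws(1) by (simp_all add: es_def vs_def)
  ultimately show ?thesis
    unfolding has_loop_def using len by (intro exI[of _ es] exI[of _ vs]) simp
qed

lemma rtrancl_Diff_edge_or_source:
  "(x, y) \<in> D\<^sup>* \<Longrightarrow> (x, y) \<in> (D - {(a, c)})\<^sup>* \<or> (x, a) \<in> (D - {(a, c)})\<^sup>*"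
proof (induction rule: rtrancl_induct)
  case (step y z)
  show ?case
  proof (cases "(y, z) = (a, c)")
    case True
    with step.IH show ?thesis
      by simp
  next
    case False
    with step.hyps(2) have "(y, z) \<in> D - {(a, c)}"
      by simp
    with step.IH show ?thesis
      by (metis rtrancl_into_rtrancl)
  qed
qed simp

text \<open>A path from \<open>b\<close> to \<open>c\<close> either avoids the edge \<open>(a, c)\<close>, and then closes a loop
  with \<open>(a, b)\<close> and \<open>(a, c)\<close>, or it passes through \<open>a\<close>, and then its part up to \<open>a\<close>
  closes a loop with \<open>(a, b)\<close>.\<close>
lemma directed_forest_siblings_not_rtrancl:
  assumes "directed_forest D" "(a, b) \<in> D" "(a, c) \<in> D" "b \<noteq> c"
  shows "(b, c) \<notin> D\<^sup>*"
proof
  assume "(b, c) \<in> D\<^sup>*"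
  then consider "(b, c) \<in> (D - {(a, c)})\<^sup>*" | "(b, a) \<in> (D - {(a, c)})\<^sup>*"
    using rtrancl_Diff_edge_or_source[of b c D a c] by blast
  then have "has_loop D"
  proof cases
    case 1
    have "(a, b) \<in> D - {(a, c)}"
      using assms(2,4) by simp
    from converse_rtrancl_into_rtrancl[OF this 1]
    have "(a, c) \<in> (D - {(a, c)})\<^sup>*" .
    with assms(3) show ?thesis
      by (rule has_loop_if_rtrancl_Diff_edge) (simp add: joins_def)
  next
    case 2
    have "(D - {(a, c)})\<^sup>* \<subseteq> D\<^sup>*"
      by (rule rtrancl_mono) blast
    with 2 have "(b, a) \<in> D\<^sup>*"
      by (rule rev_subsetD)
    then have "(b, a) \<in> (D - {(a, b)})\<^sup>*"
      using rtrancl_Diff_edge_or_source[of b a D a b] by simp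
    with assms(2) show ?thesis
      by (rule has_loop_if_rtrancl_Diff_edge) (simp add: joins_def)
  qed
  with assms(1) show False
    by (simp add: directed_forest_def)
qed

lemma has_loop_converseI:
  assumes "has_loop D"
  shows "has_loop (D\<inverse>)"
proof -
  from assms obtain es vs where loop: "es \<noteq> []" "length vs = length es" "distinct es"
    "distinct vs" "set es \<subseteq> D"
    "\<forall>k < length es. joins (es ! k) (vs ! k) (vs ! ((k + 1) mod length es))"
    by (auto simp: has_loop_def)
  show ?thesis
    unfolding has_loop_def
    by (intro exI[of _ "map prod.swap es"] exI[of _ vs])
      (use loop in \<open>auto simp: distinct_map joins_def\<close>)
qed

lemma directed_forest_converse [simp]:
  "directed_forest (D\<inverse>) \<longleftrightarrow> directed_forest D"
  by (metis converse_converse directed_forest_def has_loop_converseI)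

lemma same_component_sym:
  "same_component D u v \<Longrightarrow> same_component D v u"
  unfolding same_component_def
  by (metis converse_Un converse_converse rtrancl_converseI sup_commute)

lemma unordered_pair_commute:
  "unordered_pair D u v \<longleftrightarrow> unordered_pair D v u"
  by (auto simp: unordered_pair_def intro: same_component_sym)

lemma unordered_pair_converse [simp]:
  "unordered_pair (D\<inverse>) u v \<longleftrightarrow> unordered_pair D u v"
  by (auto simp: unordered_pair_def same_component_def rtrancl_converse Un_commute)

lemma defect_converse [simp]:
  "defect n (D\<inverse>) = defect n D"
  by (simp add: defect_def)

lemma same_component_if_edges_connected:
  assumes "D' \<subseteq> (D \<union> D\<inverse>)\<^sup>*" "same_component D' u v"
  shows "same_component D u v"
proof -
  have "((D \<union> D\<inverse>)\<^sup>*)\<inverse> = (D \<union> D\<inverse>)\<^sup>*"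
    by (simp add: rtrancl_converse[symmetric] converse_Un Un_commute)
  with assms(1) have "D' \<union> D'\<inverse> \<subseteq> (D \<union> D\<inverse>)\<^sup>*"
    by blast
  then show ?thesis
    using assms(2) rtrancl_subset_rtrancl unfolding same_component_def by blast
qed

lemma unordered_pair_antimono:
  assumes "D \<subseteq> D'\<^sup>*" "D' \<subseteq> (D \<union> D\<inverse>)\<^sup>*" "unordered_pair D' u v"
  shows "unordered_pair D u v"
  using assms rtrancl_subset_rtrancl[OF assms(1)] same_component_if_edges_connected[OF assms(2)]
  unfolding unordered_pair_def by blast

lemma defect_less_if_fewer_unordered_pairs:
  assumes "\<And>u v. unordered_pair D' u v \<Longrightarrow> unordered_pair D u v"
    and "x \<in> {1..n}" "y \<in> {1..n}" "unordered_pair D x y" "\<not> unordered_pair D' x y"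
  shows "defect n D' < defect n D"
proof -
  define pairs where
    "pairs G = {{u, v} | u v. u \<in> {1..n} \<and> v \<in> {1..n} \<and> unordered_pair G u v}" for G
  have "pairs D' \<subseteq> pairs D"
    using assms(1) by (auto simp: pairs_def)
  moreover have "{x, y} \<in> pairs D"
    using assms(2-4) by (auto simp: pairs_def)
  moreover have "{x, y} \<notin> pairs D'"
    using assms(5) by (auto simp: pairs_def doubleton_eq_iff unordered_pair_commute)
  moreover have "finite (pairs D)"
    by (rule finite_subset[of _ "(\<lambda>(u, v). {u, v}) ` ({1..n} \<times> {1..n})"])
      (auto simp: pairs_def)
  ultimately have "card (pairs D') < card (pairs D)"
    by (metis psubset_card_mono psubsetI)
  then show ?thesis
    by (simp add: defect_def pairs_def)
qed

lemma defect_path_less_out_fork: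
  assumes "b \<in> {1..n}" "c \<in> {1..n}" "b \<noteq> c" "directed_forest ({(a, b), (a, c)} \<union> E)"
  shows "defect n ({(a, b), (b, c)} \<union> E) < defect n ({(a, b), (a, c)} \<union> E)"
proof (rule defect_less_if_fewer_unordered_pairs)
  let ?F = "{(a, b), (a, c)} \<union> E" and ?P = "{(a, b), (b, c)} \<union> E"
  have "(a, c) \<in> ?P\<^sup>*"
    using rtrancl_into_rtrancl[OF r_into_rtrancl, of a b ?P c] by simp
  then have "?F \<subseteq> ?P\<^sup>*"
    by auto
  have "(b, c) \<in> (?F \<union> ?F\<inverse>)\<^sup>*"
    using rtrancl_into_rtrancl[OF r_into_rtrancl, of b a "?F \<union> ?F\<inverse>" c] by simp
  then have "?P \<subseteq> (?F \<union> ?F\<inverse>)\<^sup>*"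
    by auto
  with \<open>?F \<subseteq> ?P\<^sup>*\<close> show "unordered_pair ?F u v" if "unordered_pair ?P u v" for u v
    using that by (rule unordered_pair_antimono)
  from \<open>(b, c) \<in> (?F \<union> ?F\<inverse>)\<^sup>*\<close> show "unordered_pair ?F b c"
    using directed_forest_siblings_not_rtrancl[OF assms(4), of a b c]
      directed_forest_siblings_not_rtrancl[OF assms(4), of a c b] assms(3)
    unfolding unordered_pair_def same_component_def by auto
  show "\<not> unordered_pair ?P b c"
    by (auto simp: unordered_pair_def)
qed (fact assms)+

lemma defect_path_less_in_fork:
  assumes "a \<in> {1..n}" "b \<in> {1..n}" "a \<noteq> b" "directed_forest ({(a, c), (b, c)} \<union> E)"
  shows "defect n ({(a, b), (b, c)} \<union> E) < defect n ({(a, c), (b, c)} \<union> E)"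
proof -
  have converse_fork: "({(a, c), (b, c)} \<union> E)\<inverse> = {(c, b), (c, a)} \<union> E\<inverse>"
    and converse_path: "({(a, b), (b, c)} \<union> E)\<inverse> = {(c, b), (b, a)} \<union> E\<inverse>"
    by auto
  have "directed_forest ({(c, b), (c, a)} \<union> E\<inverse>)"
    using assms(4) by (subst converse_fork[symmetric]) simp
  then have "defect n ({(c, b), (b, a)} \<union> E\<inverse>) < defect n ({(c, b), (c, a)} \<union> E\<inverse>)"
    using assms(1-3) by (intro defect_path_less_out_fork) auto
  then show ?thesis
    using converse_fork converse_path defect_converse by metis
qed

theorem lemma5p10:
  fixes n i j k :: nat and E :: "(nat \<times> nat) set"
    and R :: "(nat \<times> nat) set \<times> (nat \<times> nat) set \<times> (nat \<times> nat) set"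
  assumes "i \<in> {1..n}" and "j \<in> {1..n}" and "k \<in> {1..n}"
    and "i \<noteq> j" and "i \<noteq> k" and "j \<noteq> k"
    and "R = pruningV i j k \<or> R = pruningA i j k"
    and "E \<subseteq> {1..n} \<times> {1..n}"
    and "R = (J, A, B)"
    and "directed_forest (J \<union> E)" and "directed_forest (A \<union> E)"
    and "directed_forest (B \<union> E)"
  shows "defect n (J \<union> E) > defect n (A \<union> E) \<and> defect n (J \<union> E) > defect n (B \<union> E)"
  \<comment> \<open>Only the join term needs to be a forest, and \<open>E\<close> need not lie in \<open>{1..n} \<times> {1..n}\<close>.\<close>
  using assms(7)
proof
  assume "R = pruningV i j k"
  then have "J = {(i, j), (i, k)}" "A = {(i, j), (j, k)}" "B = {(i, k), (k, j)}"
    using assms(9) by (simp_all add: pruningV_def)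
  then show ?thesis
    using defect_path_less_out_fork[of j n k i E] defect_path_less_out_fork[of k n j i E] assms
    by (simp add: insert_commute)
next
  assume "R = pruningA i j k"
  then have "J = {(i, k), (j, k)}" "A = {(i, j), (j, k)}" "B = {(j, i), (i, k)}"
    using assms(9) by (simp_all add: pruningA_def)
  then show ?thesis
    using defect_path_less_in_fork[of i n j k E] defect_path_less_in_fork[of j n i k E] assms
    by (simp add: insert_commute)
qed

end
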